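(* Let $K_1,K_2,t$ be positive integers with $K_2<t<K_1K_2$, and put $F=\binom{K_1K_2}{t}$, $Z_1=\binom{K_1K_2-K_2}{t-K_2}$, $Z_2=\binom{K_1K_2-1}{t-1}-\binom{K_1K_2-K_2}{t-K_2}$. Then there exist integer sets $\mathcal{S}_\mathrm{m},\mathcal{S}_1,\ldots,\mathcal{S}_{K_1}$ and a $(K_1,K_2;F;Z_1,Z_2;\mathcal{S}_\mathrm{m},\mathcal{S}_1,\ldots,\mathcal{S}_{K_1})$ HPDA such that $$\Big|\bigcup_{k_1=1}^{K_1}\mathcal{S}_{k_1}\Big|-|\mathcal{S}_\mathrm{m}|=\binom{K_1K_2}{t+1},\qquad |\mathcal{S}_{k_1}|=\binom{K_1K_2}{t+1}-\binom{K_1K_2-K_2}{t+1}+K_2\binom{K_1K_2-K_2}{t-K_2}\ \text{ for all }k_1\in[K_1].$$ Consequently, for every $N\ge K_1K_2$ there is an $F$-division coded caching scheme with uncoded placement for the $(K_1,K_2;M_1,M_2;N)$ hierarchical caching system with $$\frac{M_1}{N}=\frac{\binom{K_1K_2-K_2}{t-K_2}}{\binom{K_1K_2}{t}},\qquad \frac{M_2}{N}=\frac{t}{K_1K_2}-\frac{\binom{K_1K_2-K_2}{t-K_2}}{\binom{K_1K_2}{t}},$$ subpacketization $F=\binom{K_1K_2}{t}$, and loads $$R_1=\frac{K_1K_2-t}{t+1},\qquad R_2=\frac{K_1K_2-t}{t+1}-\frac{\binom{K_1K_2-K_2}{t+1}}{\binom{K_1K_2}{t}}+\frac{K_2\bi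nom{K_1K_2-K_2}{t-K_2}}{\binom{K_1K_2}{t}}.$$
   Context: Notation: $[a]=\{1,\ldots,a\}$, $[a:b]=\{a,\ldots,b\}$; $\binom{n}{m}=0$ when $m>n$. PDA. For positive integers $K,F,Z,S$ and an integer set $\mathcal{S}$ with $|\mathcal{S}|=S$, an $F\times K$ array $\mathbf{Q}=(q_{j,k})$ with entries in $\{*\}\cup\mathcal{S}$ is a $(K,F,Z,S)$ placement delivery array (PDA) (over $\mathcal{S}$; by default $\mathcal{S}=[S]$) if: (C1) the symbol $*$ appears exactly $Z$ times in each column; (C2) each integer of $\mathcal{S}$ occurs at least once in the array; (C3) for two distinct entries $q_{j_1,k_1}=q_{j_2,k_2}=s$ with $s$ an integer, we have $j_1\ne j_2$, $k_1\ne k_2$, and $q_{j_1,k_2}=q_{j_2,k_1}=*$. HPDA. Let $K_1,K_2,F,Z_1,Z_2$ be positive integers with $Z_1<F$, $Z_2<F$, and let $\mathcal{S}_\mathrm{m},\mathcal{S}_1,\ldots,\mathcal{S}_{K_1}$ be sets of integers. An $F\times(K_1+K_1K_2)$ array $\mathbf{P}=(\mathbf{P}^{(0)},\mathbf{P}^{(1)},\ldots,\mathbf{P}^{(K_1)})$, where $\mathbf{P}^{(0)}=(p^{(0)}_{j,k_1})_{j\in[F],k_1\in[K_1]}$ has every entry equal to $*$ or to "null" (blank), and for each $k_1\in[K_1]$, $\mathbf{P}^{(k_1)}=(p^{(k_1)}_{j,k_2})_{j\in[F],k_2\in[K_2]}$ has entries in $\{*\}\cup\mathcal{S}_{k_1}$,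 is a $(K_1,K_2;F;Z_1,Z_2;\mathcal{S}_\mathrm{m},\mathcal{S}_1,\ldots,\mathcal{S}_{K_1})$ hierarchical placement delivery array (HPDA) if: (B1) each column of $\mathbf{P}^{(0)}$ contains exactly $Z_1$ stars; (B2) for each $k_1\in[K_1]$, $\mathbf{P}^{(k_1)}$ is a $(K_2,F,Z_2,|\mathcal{S}_{k_1}|)$ PDA over $\mathcal{S}_{k_1}$; (B3) each integer $s\in\mathcal{S}_\mathrm{m}$ occurs in exactly one of the subarrays $\mathbf{P}^{(1)},\ldots,\mathbf{P}^{(K_1)}$, and whenever $p^{(k_1)}_{j,k_2}=s\in\mathcal{S}_\mathrm{m}$ we have $p^{(0)}_{j,k_1}=*$; (B4) for any $k_1\ne k_1'\in[K_1]$, $j,j'\in[F]$, $k_2,k_2'\in[K_2]$ with $p^{(k_1)}_{j,k_2}=p^{(k_1')}_{j',k_2'}$ an integer: if $p^{(k_1)}_{j',k_2}$ is an integer then $p^{(0)}_{j',k_1}=*$; and if $p^{(k_1')}_{j,k_2'}$ is an integer then $p^{(0)}_{j,k_1'}=*$. Hierarchical caching model $(K_1,K_2;M_1,M_2;N)$. A server stores $N$ independent files $W_1,\ldots,W_N$, each uniformly distributed on $B$ bits. There are $K_1$ mirror sites, each with a cache of $M_1B$ bits, and $K_1K_2$ users $U_{k_1,k_2}$ ($k_1\in[K_1]$, $k_2\in[K_2]$), each with a cache of $M_2B$ bits; user $U_{k_1,k_2}$ is attached to mirror site $k_1$. The server reaches all mirror sites through one error-free broadcast link; mirror site $k_1$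 reaches its $K_2$ attached users through an error-free broadcast link. An $F$-division scheme with uncoded placement ($F\mid B$): each file $W_n$ is split into $F$ packets $W_{n,1},\ldots,W_{n,F}$ of $B/F$ bits. In the placement phase (without knowledge of demands) mirror site $k_1$ stores a set $\mathcal{Z}_{k_1}$ of packets of total size at most $M_1B$ bits and user $U_{k_1,k_2}$ stores a set $\mathcal{Z}_{(k_1,k_2)}$ of packets of total size at most $M_2B$ bits. In the delivery phase, given a demand vector $\mathbf{d}=(d_{k_1,k_2})\in[N]^{K_1K_2}$, the server broadcasts to the mirror sites a message $X$ consisting of $S(\mathbf{d})$ packet-sized symbols, a function of the files and $\mathbf{d}$; each mirror site $k_1$ broadcasts to its attached users a message $X_{k_1}$ of $S_{k_1}(\mathbf{d})$ packet-sized symbols, a function of $X$, $\mathcal{Z}_{k_1}$ and $\mathbf{d}$; each user $U_{k_1,k_2}$ must recover $W_{d_{k_1,k_2}}$ from $X_{k_1}$, $\mathcal{Z}_{(k_1,k_2)}$ and $\mathbf{d}$. The loads are $R_1=\max_{\mathbf{d}}S(\mathbf{d})/F$ and $R_2=\max_{k_1,\mathbf{d}}S_{k_1}(\mathbf{d})/F$. *)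

theory Defs
  imports Complex_Main "HOL-Library.FuncSet"
begin

text \<open>Arrays are represented as functions of 1-based indices. An entry of a PDA
  is of type int option: None represents the star, Some s the integer s.\<close>

definition pda :: "nat \<Rightarrow> nat \<Rightarrow> nat \<Rightarrow> int set \<Rightarrow> (nat \<Rightarrow> nat \<Rightarrow> int option) \<Rightarrow> bool" where
  "pda K F Z S Q \<longleftrightarrow>
     0 < K \<and> 0 < F \<and> finite S \<and> 0 < card S \<and>
     (\<forall>j\<in>{1..F}. \<forall>k\<in>{1..K}. Q j k = None \<or> (\<exists>s\<in>S. Q j k = Some s)) \<and>
     (\<forall>k\<in>{1..K}. card {j\<in>{1..F}. Q j k = None} = Z) \<and>
     (\<forall>s\<in>S. \<exists>j\<in>{1..F}. \<exists>k\<in>{1..K}. Q j k = Some s) \<and>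
     (\<forall>j1\<in>{1..F}. \<forall>k1\<in>{1..K}. \<forall>j2\<in>{1..F}. \<forall>k2\<in>{1..K}. \<forall>s.
        (j1, k1) \<noteq> (j2, k2) \<and> Q j1 k1 = Some s \<and> Q j2 k2 = Some s \<longrightarrow>
        j1 \<noteq> j2 \<and> k1 \<noteq> k2 \<and> Q j1 k2 = None \<and> Q j2 k1 = None)"

text \<open>HPDA. P0 j k1 = True means the entry of P^(0) in row j, column k1 is a star,
  False means it is null. P k1 j k2 is the entry of P^(k1) in row j, column k2.\<close>

definition hpda :: "nat \<Rightarrow> nat \<Rightarrow> nat \<Rightarrow> nat \<Rightarrow> nat \<Rightarrow> int set \<Rightarrow> (nat \<Rightarrow> int set)
     \<Rightarrow> (nat \<Rightarrow> nat \<Rightarrow> bool) \<Rightarrow> (nat \<Rightarrow> nat \<Rightarrow> nat \<Rightarrow> int option) \<Rightarrow> bool" where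
  "hpda K1 K2 F Z1 Z2 Sm S P0 P \<longleftrightarrow>
     0 < K1 \<and> 0 < K2 \<and> 0 < F \<and> 0 < Z1 \<and> Z1 < F \<and> Z2 < F \<and>
     \<comment> \<open>(B1)\<close>
     (\<forall>k1\<in>{1..K1}. card {j\<in>{1..F}. P0 j k1} = Z1) \<and>
     \<comment> \<open>(B2)\<close>
     (\<forall>k1\<in>{1..K1}. pda K2 F Z2 (S k1) (P k1)) \<and>
     \<comment> \<open>(B3)\<close>
     (\<forall>s\<in>Sm. (\<exists>!k1. k1 \<in> {1..K1} \<and> (\<exists>j\<in>{1..F}. \<exists>k2\<in>{1..K2}. P k1 j k2 = Some s)) \<and>
        (\<forall>k1\<in>{1..K1}. \<forall>j\<in>{1..F}. \<forall>k2\<in>{1..K2}. P k1 j k2 = Some s \<longrightarrow> P0 j k1)) \<and>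
     \<comment> \<open>(B4)\<close>
     (\<forall>k1\<in>{1..K1}. \<forall>k1'\<in>{1..K1}. \<forall>j\<in>{1..F}. \<forall>j'\<in>{1..F}. \<forall>k2\<in>{1..K2}. \<forall>k2'\<in>{1..K2}. \<forall>s.
        k1 \<noteq> k1' \<and> P k1 j k2 = Some s \<and> P k1' j' k2' = Some s \<longrightarrow>
        (P k1 j' k2 \<noteq> None \<longrightarrow> P0 j' k1) \<and> (P k1' j k2' \<noteq> None \<longrightarrow> P0 j k1'))"

definition packet :: "nat \<Rightarrow> (nat \<Rightarrow> bool list) \<Rightarrow> nat \<Rightarrow> nat \<Rightarrow> bool list" where
  "packet L W n f = take L (drop ((f - 1) * L) (W n))"

definition cache_of :: "nat \<Rightarrow> (nat \<times> nat) set \<Rightarrow> (nat \<Rightarrow> bool list) \<Rightarrow> (nat \<times> nat \<Rightarrow> bool list)" where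
  "cache_of L Zc W = (\<lambda>(n, f). if (n, f) \<in> Zc then packet L W n f else [])"

definition valid_files :: "nat \<Rightarrow> nat \<Rightarrow> (nat \<Rightarrow> bool list) \<Rightarrow> bool" where
  "valid_files N B W \<longleftrightarrow> (\<forall>n\<in>{1..N}. length (W n) = B)"

definition demands :: "nat \<Rightarrow> nat \<Rightarrow> nat \<Rightarrow> (nat \<times> nat \<Rightarrow> nat) set" where
  "demands K1 K2 N = ({1..K1} \<times> {1..K2}) \<rightarrow>\<^sub>E {1..N}"

text \<open>Zm k1: packets cached at mirror k1; Zu (k1,k2): packets cached at user U_{k1,k2};
  enc d W: server message (list of packet-sized symbols), Sd d its length;
  mir k1 d X C: message of mirror k1 from X and its cache content C, Sk k1 d its length;
  dec (k1,k2) d Y C: decoded file of user U_{k1,k2} from mirror message Y and its cache C.\<close>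

definition hier_scheme ::
  "nat \<Rightarrow> nat \<Rightarrow> real \<Rightarrow> real \<Rightarrow> nat \<Rightarrow> nat \<Rightarrow> nat \<Rightarrow>
   (nat \<Rightarrow> (nat \<times> nat) set) \<Rightarrow> (nat \<times> nat \<Rightarrow> (nat \<times> nat) set) \<Rightarrow>
   ((nat \<times> nat \<Rightarrow> nat) \<Rightarrow> (nat \<Rightarrow> bool list) \<Rightarrow> bool list list) \<Rightarrow> ((nat \<times> nat \<Rightarrow> nat) \<Rightarrow> nat) \<Rightarrow>
   (nat \<Rightarrow> (nat \<times> nat \<Rightarrow> nat) \<Rightarrow> bool list list \<Rightarrow> (nat \<times> nat \<Rightarrow> bool list) \<Rightarrow> bool list list) \<Rightarrow>
   (nat \<Rightarrow> (nat \<times> nat \<Rightarrow> nat) \<Rightarrow> nat) \<Rightarrow>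
   (nat \<times> nat \<Rightarrow> (nat \<times> nat \<Rightarrow> nat) \<Rightarrow> bool list list \<Rightarrow> (nat \<times> nat \<Rightarrow> bool list) \<Rightarrow> bool list) \<Rightarrow>
   real \<Rightarrow> real \<Rightarrow> bool" where
  "hier_scheme K1 K2 M1 M2 N F B Zm Zu enc Sd mir Sk dec R1 R2 \<longleftrightarrow>
     (let L = B div F; D = demands K1 K2 N in
       0 < F \<and> F dvd B \<and>
       (\<forall>k1\<in>{1..K1}. Zm k1 \<subseteq> {1..N} \<times> {1..F} \<and>
          real (card (Zm k1)) * (real B / real F) \<le> M1 * real B) \<and>
       (\<forall>k1\<in>{1..K1}. \<forall>k2\<in>{1..K2}. Zu (k1, k2) \<subseteq> {1..N} \<times> {1..F} \<and>
          real (card (Zu (k1, k2))) * (real B / real F) \<le> M2 * real B) \<and>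
       (\<forall>d\<in>D. \<forall>W. valid_files N B W \<longrightarrow>
          length (enc d W) = Sd d \<and> (\<forall>x\<in>set (enc d W). length x = L)) \<and>
       (\<forall>d\<in>D. \<forall>W. \<forall>k1\<in>{1..K1}. valid_files N B W \<longrightarrow>
          length (mir k1 d (enc d W) (cache_of L (Zm k1) W)) = Sk k1 d \<and>
          (\<forall>x\<in>set (mir k1 d (enc d W) (cache_of L (Zm k1) W)). length x = L)) \<and>
       (\<forall>d\<in>D. \<forall>W. \<forall>k1\<in>{1..K1}. \<forall>k2\<in>{1..K2}. valid_files N B W \<longrightarrow>
          dec (k1, k2) d (mir k1 d (enc d W) (cache_of L (Zm k1) W)) (cache_of L (Zu (k1, k2)) W)
            = W (d (k1, k2))) \<and>
       R1 = Max ((\<lambda>d. real (Sd d) / real F) ` D) \<and>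
       R2 = Max ((\<lambda>(k1, d). real (Sk k1 d) / real F) ` ({1..K1} \<times> D)))"

end

theory Submission
  imports Defs "HOL-Library.Z2" "HOL-Library.Function_Algebras"
begin

text \<open>Index the rows by the t-subsets T of the K1*K2 users and let G k1 be the group of
  mirror k1. Mirror k1 caches the rows containing G k1; user u in group k1 caches the rows
  containing u but not G k1. Every other cell of user u in row T is labelled by the
  (t+1)-set T \<union> {u} if u \<notin> T, as in the Maddah-Ali--Niesen PDA, and by the private
  label (u, T) if G k1 \<subseteq> T. Equal labels T \<union> {u} = T' \<union> {u'} force u \<in> T' and
  u' \<in> T, which yields condition (C3) inside a group and (B4) across groups. The server
  multicasts one XOR per (t+1)-set; mirror k1 forwards those meeting G k1 after removing
  the pieces it caches, and sends the privately labelled packets uncoded.\<close>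

lemma card_supersets:
  assumes "finite U" "S \<subseteq> U" "card S \<le> k"
  shows "card {T. T \<subseteq> U \<and> card T = k \<and> S \<subseteq> T} = (card U - card S) choose (k - card S)"
proof -
  have fin_S: "finite S" using assms finite_subset by blast
  have eq: "{T. T \<subseteq> U \<and> card T = k \<and> S \<subseteq> T} = (\<lambda>B. B \<union> S) ` {B. B \<subseteq> U - S \<and> card B = k - card S}"
  proof (intro set_eqI iffI)
    fix T assume T: "T \<in> {T. T \<subseteq> U \<and> card T = k \<and> S \<subseteq> T}"
    then have "T = (T - S) \<union> S" "T - S \<subseteq> U - S" by auto
    moreover have "card (T - S) = k - card S" using T fin_S card_Diff_subset by force
    ultimately show "T \<in> (\<lambda>B. B \<union> S) ` {B. B \<subseteq> U - S \<and> card B = k - card S}" by blast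
  next
    fix T assume "T \<in> (\<lambda>B. B \<union> S) ` {B. B \<subseteq> U - S \<and> card B = k - card S}"
    then obtain B where B: "B \<subseteq> U - S" "card B = k - card S" "T = B \<union> S" by auto
    have "finite B" using B assms finite_subset by (metis finite_Diff)
    then have "card T = k" using B fin_S assms card_Un_disjoint[of B S] by auto
    then show "T \<in> {T. T \<subseteq> U \<and> card T = k \<and> S \<subseteq> T}" using B assms by auto
  qed
  have "inj_on (\<lambda>B. B \<union> S) {B. B \<subseteq> U - S \<and> card B = k - card S}"
    by (rule inj_onI) blast
  then have "card {T. T \<subseteq> U \<and> card T = k \<and> S \<subseteq> T} = card {B. B \<subseteq> U - S \<and> card B = k - card S}"
    unfolding eq by (rule card_image)
  also have "\<dots> = card (U - S) choose (k - card S)" using assms by (simp add: n_subsets)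
  also have "card (U - S) = card U - card S" using assms fin_S card_Diff_subset by auto
  finally show ?thesis .
qed

lemma card_filter_bij_betw:
  assumes "bij_betw r I R"
  shows "card {j \<in> I. Q (r j)} = card {x \<in> R. Q x}"
proof -
  have "{x \<in> R. Q x} = r ` {j \<in> I. Q (r j)}" using assms by (auto simp: bij_betw_def)
  moreover have "inj_on r {j \<in> I. Q (r j)}" using assms by (auto simp: bij_betw_def inj_on_def)
  ultimately show ?thesis by (simp add: card_image)
qed

lemma finite_inj_on_int: "finite X \<Longrightarrow> \<exists>g :: 'a \<Rightarrow> int. inj_on g X"
proof -
  assume "finite X"
  then obtain h where "bij_betw h X {0..<card X}" using ex_bij_betw_finite_nat by blast
  then have "inj_on (\<lambda>x. int (h x)) X" by (auto simp: bij_betw_def inj_on_def)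
  then show ?thesis by blast
qed

lemma sum_split_off:
  assumes "finite A" "u \<in> A" "\<not> P u"
  shows "sum f A = f u + sum f {v \<in> A. P v} + sum f {v \<in> A - {u}. \<not> P v}"
proof -
  have "sum f A = f u + sum f (A - {u})" using assms by (simp add: sum.remove)
  also have "sum f (A - {u}) = sum f {v \<in> A. P v} + sum f {v \<in> A - {u}. \<not> P v}"
    using assms by (subst sum.union_disjoint[symmetric]) (auto intro: sum.cong)
  finally show ?thesis by (simp add: add.assoc)
qed

lemma the_map_of_zip_map: "x \<in> set xs \<Longrightarrow> the (map_of (zip xs (map f xs)) x) = f x"
  by (simp add: map_of_zip_map)

lemma Max_image_const: "A \<noteq> {} \<Longrightarrow> (\<And>x. x \<in> A \<Longrightarrow> f x = c) \<Longrightarrow> Max (f ` A) = c"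
proof -
  assume "A \<noteq> {}" "\<And>x. x \<in> A \<Longrightarrow> f x = c"
  then have "f ` A = {c}" by auto
  then show ?thesis by simp
qed

lemma cache_of_mem: "(n, f) \<in> Zc \<Longrightarrow> cache_of L Zc W (n, f) = packet L W n f"
  by (simp add: cache_of_def)

lemma demands_nonempty: "0 < N \<Longrightarrow> demands K1 K2 N \<noteq> {}"
proof -
  assume "0 < N"
  then have "(\<lambda>v\<in>{1..K1} \<times> {1..K2}. 1) \<in> demands K1 K2 N" by (auto simp: demands_def)
  then show ?thesis by blast
qed

text \<open>Packets are turned into functions of type nat \<Rightarrow> bit, so that XOR is addition in an
  abelian group and can be summed over sets; from_bits L reads the first L bits back.\<close>

definition bits :: "bool list \<Rightarrow> nat \<Rightarrow> bit" where
  "bits p i = (if i < length p \<and> p ! i then 1 else 0)"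

definition from_bits :: "nat \<Rightarrow> (nat \<Rightarrow> bit) \<Rightarrow> bool list" where
  "from_bits L x = map (\<lambda>i. x i = 1) [0..<L]"

lemma length_from_bits [simp]: "length (from_bits L x) = L"
  by (simp add: from_bits_def)

lemma from_bits_bits: "length p = L \<Longrightarrow> from_bits L (bits p) = p"
  by (rule nth_equalityI) (auto simp: bits_def from_bits_def)

lemma from_bits_bits_diff: "from_bits L (bits (from_bits L x) - y) = from_bits L (x - y)"
proof -
  have "bits (from_bits L x) i = x i" if "i < L" for i
    using that by (cases "x i") (auto simp: bits_def from_bits_def)
  then show ?thesis by (simp add: from_bits_def)
qed

lemma length_packet: "length (W n) = F * L \<Longrightarrow> f \<in> {1..F} \<Longrightarrow> length (packet L W n f) = L"
proof -
  assume a: "length (W n) = F * L" "f \<in> {1..F}"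
  have "F * L - (f - 1) * L = (F - (f - 1)) * L" by (simp add: diff_mult_distrib)
  moreover have "1 \<le> F - (f - 1)" using a by auto
  ultimately have "L \<le> F * L - (f - 1) * L" by (metis mult_1 mult_le_mono1)
  then show ?thesis using a by (simp add: packet_def)
qed

lemma concat_take_drop_blocks:
  "length w = F * L \<Longrightarrow> concat (map (\<lambda>i. take L (drop (i * L) w)) [0..<F]) = w"
proof (induction F arbitrary: w)
  case (Suc F)
  have IH: "concat (map (\<lambda>i. take L (drop (i * L) (drop L w))) [0..<F]) = drop L w"
    using Suc.prems by (intro Suc.IH) simp
  have "[0..<Suc F] = 0 # map Suc [0..<F]" by (simp add: upt_conv_Cons map_Suc_upt)
  then have "concat (map (\<lambda>i. take L (drop (i * L) w)) [0..<Suc F])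
      = take L w @ concat (map (\<lambda>i. take L (drop (i * L) (drop L w))) [0..<F])"
    by (simp only: list.map concat.simps map_map) (simp add: comp_def add.commute)
  then show ?case using IH by simp
qed simp

lemma concat_packets: "length (W n) = F * L \<Longrightarrow> concat (map (packet L W n) [1..<F+1]) = W n"
proof -
  assume "length (W n) = F * L"
  moreover have "[1..<F+1] = map Suc [0..<F]" by (simp add: map_Suc_upt)
  ultimately show ?thesis by (simp add: packet_def comp_def concat_take_drop_blocks)
qed

definition label :: "'a \<Rightarrow> 'a set \<Rightarrow> 'a set + 'a \<times> 'a set" where
  "label u T = (if u \<in> T then Inr (u, T) else Inl (insert u T))"

lemma label_eq_label:
  assumes "label u T = label u' T'" and "(u, T) \<noteq> (u', T')"
  shows "u \<notin> T \<and> u' \<notin> T' \<and> u \<noteq> u' \<and> u \<in> T' \<and> u' \<in> T"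
proof -
  have notin: "u \<notin> T" "u' \<notin> T'" using assms by (auto simp: label_def split: if_splits)
  then have ins: "insert u T = insert u' T'" using assms(1) by (simp add: label_def)
  have "u \<noteq> u'"
  proof
    assume "u = u'"
    then have "T = T'" using ins notin by (metis insert_ident)
    then show False using assms(2) \<open>u = u'\<close> by simp
  qed
  then show ?thesis using ins notin by (metis insertCI insertE)
qed

type_synonym hlabel = "(nat \<times> nat) set + (nat \<times> nat) \<times> (nat \<times> nat) set"

locale hier_setup =
  fixes K1 K2 t :: nat
  assumes K1_pos: "0 < K1" and K2_pos: "0 < K2" and K2_le_t: "K2 \<le> t" and t_less: "t < K1 * K2"
begin

abbreviation "F \<equiv> (K1 * K2) choose t"
abbreviation "Z1 \<equiv> (K1 * K2 - K2) choose (t - K2)"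
abbreviation "Z2 \<equiv> ((K1 * K2 - 1) choose (t - 1)) - Z1"

definition U :: "(nat \<times> nat) set" where "U = {1..K1} \<times> {1..K2}"
definition G :: "nat \<Rightarrow> (nat \<times> nat) set" where "G k1 = {k1} \<times> {1..K2}"
definition Rows :: "(nat \<times> nat) set set" where "Rows = {T. T \<subseteq> U \<and> card T = t}"
definition Coded :: "(nat \<times> nat) set set" where "Coded = {A. A \<subseteq> U \<and> card A = t + 1}"
definition Coded_at :: "nat \<Rightarrow> (nat \<times> nat) set set" where
  "Coded_at k1 = {A \<in> Coded. A \<inter> G k1 \<noteq> {}}"
definition Uncoded :: "nat \<Rightarrow> ((nat \<times> nat) \<times> (nat \<times> nat) set) set" where
  "Uncoded k1 = G k1 \<times> {T \<in> Rows. G k1 \<subseteq> T}"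
definition Uncoded_all :: "((nat \<times> nat) \<times> (nat \<times> nat) set) set" where
  "Uncoded_all = {(u, T). u \<in> U \<and> T \<in> Rows \<and> G (fst u) \<subseteq> T}"

lemma finite_U [simp]: "finite U" by (simp add: U_def)
lemma card_U: "card U = K1 * K2" by (simp add: U_def card_cartesian_product)
lemma card_G [simp]: "card (G k1) = K2" by (simp add: G_def card_cartesian_product)
lemma finite_G [simp]: "finite (G k1)" by (simp add: G_def)
lemma G_subset_U: "k1 \<in> {1..K1} \<Longrightarrow> G k1 \<subseteq> U" by (auto simp: G_def U_def)
lemma mem_G: "k2 \<in> {1..K2} \<Longrightarrow> (k1, k2) \<in> G k1" by (simp add: G_def)

lemma finite_Rows [simp]: "finite Rows"
  unfolding Rows_def by (rule finite_subset[of _ "Pow U"]) auto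
lemma finite_Coded [simp]: "finite Coded"
  unfolding Coded_def by (rule finite_subset[of _ "Pow U"]) auto
lemma card_Rows: "card Rows = F" by (simp add: Rows_def n_subsets card_U)
lemma card_Coded: "card Coded = (K1 * K2) choose (t + 1)" by (simp add: Coded_def n_subsets card_U)

lemma insert_mem_Coded: "u \<in> U \<Longrightarrow> T \<in> Rows \<Longrightarrow> u \<notin> T \<Longrightarrow> insert u T \<in> Coded"
  using finite_subset[OF _ finite_U] by (auto simp: Rows_def Coded_def)

lemma Diff_mem_Rows: "A \<in> Coded \<Longrightarrow> u \<in> A \<Longrightarrow> A - {u} \<in> Rows"
  by (auto simp: Rows_def Coded_def)

lemma card_Rows_supset:
  "S \<subseteq> U \<Longrightarrow> card S \<le> t \<Longrightarrow> card {T \<in> Rows. S \<subseteq> T} = (K1 * K2 - card S) choose (t - card S)"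
  using card_supersets[of U S t] by (simp add: Rows_def card_U conj_assoc)

lemma card_Rows_supset_G: "k1 \<in> {1..K1} \<Longrightarrow> card {T \<in> Rows. G k1 \<subseteq> T} = Z1"
  using card_Rows_supset[of "G k1"] G_subset_U K2_le_t by simp

lemma card_Rows_mem: "u \<in> U \<Longrightarrow> card {T \<in> Rows. u \<in> T} = (K1 * K2 - 1) choose (t - 1)"
  using card_Rows_supset[of "{u}"] K2_pos K2_le_t by simp

lemma card_Rows_star:
  assumes "k1 \<in> {1..K1}" "u \<in> G k1"
  shows "card {T \<in> Rows. u \<in> T \<and> \<not> G k1 \<subseteq> T} = Z2"
proof -
  have sub: "{T \<in> Rows. G k1 \<subseteq> T} \<subseteq> {T \<in> Rows. u \<in> T}" using assms by auto
  have "{T \<in> Rows. u \<in> T \<and> \<not> G k1 \<subseteq> T} = {T \<in> Rows. u \<in> T} - {T \<in> Rows. G k1 \<subseteq> T}" by auto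
  then have "card {T \<in> Rows. u \<in> T \<and> \<not> G k1 \<subseteq> T} = card {T \<in> Rows. u \<in> T} - card {T \<in> Rows. G k1 \<subseteq> T}"
    using sub by (simp add: card_Diff_subset)
  moreover have "u \<in> U" using assms G_subset_U by blast
  ultimately show ?thesis using card_Rows_supset_G[OF assms(1)] card_Rows_mem by simp
qed

lemma Z1_le: "Z1 \<le> (K1 * K2 - 1) choose (t - 1)"
proof -
  have k: "1 \<in> {1..K1}" "(1, 1) \<in> G 1" using K1_pos K2_pos by (auto simp: G_def)
  have "card {T \<in> Rows. G 1 \<subseteq> T} \<le> card {T \<in> Rows. (1, 1) \<in> T}"
    using k by (intro card_mono) auto
  moreover have "(1, 1) \<in> U" using G_subset_U k by blast
  ultimately show ?thesis using card_Rows_supset_G[OF k(1)] card_Rows_mem by simp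
qed

lemma Z1_pos: "0 < Z1" using K2_le_t t_less by simp

lemma F_pos: "0 < F" using t_less by simp

lemma Z1_less_F: "Z1 < F" and Z2_less_F: "Z2 < F"
proof -
  have "K1 * K2 = Suc (K1 * K2 - 1)" "t = Suc (t - 1)" using t_less K2_pos K2_le_t by auto
  then have "F = ((K1 * K2 - 1) choose (t - 1)) + ((K1 * K2 - 1) choose t)"
    by (metis binomial_Suc_Suc)
  moreover have "0 < (K1 * K2 - 1) choose t" using t_less by simp
  ultimately show "Z1 < F" "Z2 < F" using Z1_le by linarith+
qed

lemma card_Coded_at:
  assumes "k1 \<in> {1..K1}"
  shows "card (Coded_at k1) = ((K1 * K2) choose (t + 1)) - ((K1 * K2 - K2) choose (t + 1))"
proof -
  define C where "C = {A. A \<subseteq> U - G k1 \<and> card A = t + 1}"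
  have "Coded_at k1 = Coded - C" "C \<subseteq> Coded" by (auto simp: Coded_at_def Coded_def C_def)
  moreover have "card C = (K1 * K2 - K2) choose (t + 1)"
    using assms G_subset_U card_U unfolding C_def by (simp add: n_subsets card_Diff_subset)
  moreover have "finite C" using \<open>C \<subseteq> Coded\<close> finite_Coded finite_subset by blast
  ultimately show ?thesis using card_Coded by (simp add: card_Diff_subset)
qed

lemma card_Uncoded: "k1 \<in> {1..K1} \<Longrightarrow> card (Uncoded k1) = K2 * Z1"
  by (simp add: Uncoded_def card_cartesian_product card_Rows_supset_G)

lemma Uncoded_all_subset: "Uncoded_all \<subseteq> U \<times> Rows"
  by (auto simp: Uncoded_all_def)

lemma finite_Uncoded [simp]: "finite (Uncoded k1)" by (simp add: Uncoded_def)
lemma finite_Coded_at [simp]: "finite (Coded_at k1)" by (simp add: Coded_at_def)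

lemma choose_Suc_div_choose: "real ((K1 * K2) choose (t + 1)) / real F = (real (K1 * K2) - real t) / (real t + 1)"
proof -
  have "(t + 1) * ((K1 * K2) choose (t + 1)) = (K1 * K2 - t) * F"
    using binomial_absorption[of t "K1 * K2"] binomial_absorb_comp[of "K1 * K2" t] by simp
  then have "real ((t + 1) * ((K1 * K2) choose (t + 1))) = real ((K1 * K2 - t) * F)"
    by (simp only:)
  then have "(real t + 1) * real ((K1 * K2) choose (t + 1)) = (real (K1 * K2) - real t) * real F"
    using t_less by (simp add: of_nat_diff algebra_simps)
  moreover have "0 < real F" using t_less by simp
  ultimately show ?thesis by (simp add: field_simps)
qed

lemma user_memory_fraction: "real t / real (K1 * K2) - real Z1 / real F = real Z2 / real F"
proof -
  have "t * F = (K1 * K2) * ((K1 * K2 - 1) choose (t - 1))"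
    using K2_pos K2_le_t by (intro times_binomial_minus1_eq) simp
  then have "real t * real F = real (K1 * K2) * real ((K1 * K2 - 1) choose (t - 1))"
    by (metis of_nat_mult)
  moreover have "real (K1 * K2) \<noteq> 0" "real F \<noteq> 0" using K1_pos K2_pos t_less by auto
  ultimately have "real t / real (K1 * K2) = real ((K1 * K2 - 1) choose (t - 1)) / real F"
    by (simp add: field_simps)
  then show ?thesis using Z1_le by (simp add: of_nat_diff diff_divide_distrib)
qed

definition Labels :: "hlabel set" where
  "Labels = Coded <+> (U \<times> Rows)"

definition Labels_at :: "nat \<Rightarrow> hlabel set" where
  "Labels_at k1 = Coded_at k1 <+> Uncoded k1"

definition cell :: "nat \<Rightarrow> (nat \<times> nat) set \<Rightarrow> nat \<Rightarrow> hlabel option" where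
  "cell k1 T k2 = (if (k1, k2) \<in> T \<and> \<not> G k1 \<subseteq> T then None else Some (label (k1, k2) T))"

lemma cell_eq_None: "cell k1 T k2 = None \<longleftrightarrow> (k1, k2) \<in> T \<and> \<not> G k1 \<subseteq> T"
  by (simp add: cell_def)

lemma cell_eq_Some: "cell k1 T k2 = Some l \<Longrightarrow> l = label (k1, k2) T"
  by (simp add: cell_def split: if_splits)

lemma cell_eq_Inl: "cell k1 T k2 = Some (Inl A) \<Longrightarrow> (k1, k2) \<notin> T \<and> A = insert (k1, k2) T"
  by (auto simp: cell_def label_def split: if_splits)

lemma cell_eq_Inr: "cell k1 T k2 = Some (Inr (u, T')) \<Longrightarrow> u = (k1, k2) \<and> T' = T \<and> G k1 \<subseteq> T"
  by (auto simp: cell_def label_def split: if_splits)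

lemma finite_Labels [simp]: "finite Labels" by (simp add: Labels_def)

lemma Labels_at_subset_Labels:
  assumes "k1 \<in> {1..K1}" shows "Labels_at k1 \<subseteq> Labels"
proof -
  have "Coded_at k1 \<subseteq> Coded" "Uncoded k1 \<subseteq> U \<times> Rows"
    using G_subset_U[OF assms] by (auto simp: Coded_at_def Uncoded_def)
  then show ?thesis by (auto simp: Labels_at_def Labels_def)
qed

lemma cell_in_Labels_at:
  assumes "k1 \<in> {1..K1}" "k2 \<in> {1..K2}" "T \<in> Rows" "cell k1 T k2 = Some l"
  shows "l \<in> Labels_at k1"
proof (cases "(k1, k2) \<in> T")
  case True
  then have "G k1 \<subseteq> T" "l = Inr ((k1, k2), T)"
    using assms(4) by (auto simp: cell_def label_def split: if_splits)
  then show ?thesis using assms mem_G by (auto simp: Labels_at_def Uncoded_def)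
next
  case False
  then have "l = Inl (insert (k1, k2) T)" using assms(4) by (simp add: cell_def label_def)
  moreover have "insert (k1, k2) T \<in> Coded"
    using insert_mem_Coded assms(1-3) False by (simp add: U_def)
  ultimately show ?thesis using mem_G[OF assms(2)] by (auto simp: Labels_at_def Coded_at_def)
qed

lemma Labels_at_obtain_cell:
  assumes "l \<in> Labels_at k1"
  obtains T k2 where "T \<in> Rows" "k2 \<in> {1..K2}" "cell k1 T k2 = Some l"
  using assms unfolding Labels_at_def
proof (elim PlusE)
  fix A assume A: "A \<in> Coded_at k1" "l = Inl A"
  then obtain k2 where k2: "(k1, k2) \<in> A" "k2 \<in> {1..K2}" "A \<in> Coded"
    unfolding Coded_at_def G_def by blast
  then have "\<not> G k1 \<subseteq> A - {(k1, k2)}" using mem_G by blast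
  then have "cell k1 (A - {(k1, k2)}) k2 = Some l"
    using A k2 by (simp add: cell_def label_def insert_absorb)
  then show thesis using that Diff_mem_Rows k2 by blast
next
  fix p assume p: "p \<in> Uncoded k1" "l = Inr p"
  then obtain k2 T where "p = ((k1, k2), T)" "k2 \<in> {1..K2}" "T \<in> Rows" "G k1 \<subseteq> T"
    by (auto simp: Uncoded_def G_def)
  moreover have "cell k1 T k2 = Some l" using calculation mem_G p by (auto simp: cell_def label_def)
  ultimately show thesis using that by blast
qed

lemma Union_Coded_at: "(\<Union>k1\<in>{1..K1}. Coded_at k1) = Coded"
proof (intro equalityI subsetI)
  fix A assume A: "A \<in> Coded"
  have "A \<noteq> {}" "A \<subseteq> U" using A by (auto simp: Coded_def)
  then obtain a b where ab: "(a, b) \<in> A" "a \<in> {1..K1}" "b \<in> {1..K2}"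
    unfolding U_def by blast
  then have "A \<in> Coded_at a" using A mem_G unfolding Coded_at_def by blast
  then show "A \<in> (\<Union>k1\<in>{1..K1}. Coded_at k1)" using ab by blast
qed (auto simp: Coded_at_def)

lemma Union_Labels_at: "(\<Union>k1\<in>{1..K1}. Labels_at k1) = Coded <+> Uncoded_all"
proof -
  have "(\<Union>k1\<in>{1..K1}. Uncoded k1) = Uncoded_all"
    by (auto simp: Uncoded_def Uncoded_all_def G_def U_def)
  moreover have "(\<Union>k1\<in>{1..K1}. Labels_at k1)
      = (\<Union>k1\<in>{1..K1}. Coded_at k1) <+> (\<Union>k1\<in>{1..K1}. Uncoded k1)"
    unfolding Labels_at_def Plus_def image_UN UN_Un_distrib ..
  ultimately show ?thesis using Union_Coded_at by simp
qed

lemma finite_Labels_at [simp]: "finite (Labels_at k1)" by (simp add: Labels_at_def)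

lemma card_Labels_at: "card (Labels_at k1) = card (Coded_at k1) + card (Uncoded k1)"
  by (simp add: Labels_at_def card_Plus)

lemma demands_range: "d \<in> demands K1 K2 N \<Longrightarrow> v \<in> U \<Longrightarrow> d v \<in> {1..N}"
  by (auto simp: demands_def U_def)

lemma choose_Suc_le: "(K1 * K2 - K2) choose (t + 1) \<le> (K1 * K2) choose (t + 1)"
  by (rule binomial_right_mono) simp

lemma card_Labels_at_eq:
  "k1 \<in> {1..K1} \<Longrightarrow> card (Labels_at k1) = ((K1 * K2) choose (t + 1)) - ((K1 * K2 - K2) choose (t + 1)) + K2 * Z1"
  using card_Labels_at card_Coded_at card_Uncoded by simp

lemma card_Labels_at_div_F:
  "k1 \<in> {1..K1} \<Longrightarrow> real (card (Labels_at k1)) / real F = (real (K1 * K2) - real t) / (real t + 1)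
     - real ((K1 * K2 - K2) choose (t + 1)) / real F + real K2 * real Z1 / real F"
  using card_Labels_at_eq choose_Suc_div_choose choose_Suc_le
  by (simp add: of_nat_diff add_divide_distrib diff_divide_distrib)

lemma cell_same_label_same_group:
  assumes "ka \<in> {1..K2}" "kb \<in> {1..K2}" "(T, ka) \<noteq> (T', kb)"
    and "cell k1 T ka = Some l" "cell k1 T' kb = Some l"
  shows "T \<noteq> T' \<and> ka \<noteq> kb \<and> cell k1 T kb = None \<and> cell k1 T' ka = None"
proof -
  have "label (k1, ka) T = label (k1, kb) T'" using assms(4,5) cell_eq_Some by metis
  then have mem: "(k1, ka) \<notin> T \<and> (k1, kb) \<notin> T' \<and> ka \<noteq> kb \<and> (k1, ka) \<in> T' \<and> (k1, kb) \<in> T"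
    using label_eq_label assms(3) by fastforce
  moreover have "\<not> G k1 \<subseteq> T" "\<not> G k1 \<subseteq> T'" using mem mem_G assms(1,2) by blast+
  ultimately show ?thesis by (auto simp: cell_eq_None)
qed

lemma cell_same_label_other_group:
  assumes "k1 \<noteq> k1'" "cell k1 T k2 = Some l" "cell k1' T' k2' = Some l"
  shows "(cell k1 T' k2 \<noteq> None \<longrightarrow> G k1 \<subseteq> T') \<and> (cell k1' T k2' \<noteq> None \<longrightarrow> G k1' \<subseteq> T)"
proof -
  have "label (k1, k2) T = label (k1', k2') T'" using assms(2,3) cell_eq_Some by metis
  then have "(k1, k2) \<in> T' \<and> (k1', k2') \<in> T" using label_eq_label assms(1) by fastforce
  then show ?thesis by (auto simp: cell_eq_None)
qed

end

locale indexed_rows = hier_setup +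
  fixes r :: "nat \<Rightarrow> (nat \<times> nat) set"
  assumes bij_r: "bij_betw r {1..(K1 * K2) choose t} Rows"
begin

lemma r_mem_Rows: "j \<in> {1..F} \<Longrightarrow> r j \<in> Rows"
  using bij_r by (auto simp: bij_betw_def)

lemma r_eq_iff: "j \<in> {1..F} \<Longrightarrow> j' \<in> {1..F} \<Longrightarrow> r j = r j' \<longleftrightarrow> j = j'"
  using bij_r by (auto simp: bij_betw_def inj_on_def)

lemma Rows_obtain_r:
  assumes "T \<in> Rows" obtains j where "j \<in> {1..F}" "r j = T"
proof -
  have "T \<in> r ` {1..F}" using assms bij_r by (simp add: bij_betw_def)
  then show thesis using that by blast
qed

definition row_index :: "(nat \<times> nat) set \<Rightarrow> nat" where
  "row_index T = inv_into {1..F} r T"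

lemma row_index_r: "j \<in> {1..F} \<Longrightarrow> row_index (r j) = j"
  using bij_r by (simp add: row_index_def bij_betw_inv_into_left)

lemma r_row_index: "T \<in> Rows \<Longrightarrow> r (row_index T) = T"
  using bij_r by (simp add: row_index_def bij_betw_inv_into_right)

lemma row_index_mem: "T \<in> Rows \<Longrightarrow> row_index T \<in> {1..F}"
  using bij_r unfolding row_index_def by (metis bij_betw_def inv_into_into)

lemma card_rows_with: "card {j \<in> {1..F}. Q (r j)} = card {T \<in> Rows. Q T}"
  by (rule card_filter_bij_betw[OF bij_r])

end

locale hpda_construction = indexed_rows +
  fixes g :: "hlabel \<Rightarrow> int"
  assumes inj_g: "inj_on g Labels"
begin

definition P :: "nat \<Rightarrow> nat \<Rightarrow> nat \<Rightarrow> int option" where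
  "P k1 j k2 = map_option g (cell k1 (r j) k2)"

definition P0 :: "nat \<Rightarrow> nat \<Rightarrow> bool" where
  "P0 j k1 \<longleftrightarrow> G k1 \<subseteq> r j"

definition S :: "nat \<Rightarrow> int set" where
  "S k1 = g ` Labels_at k1"

definition Sm :: "int set" where
  "Sm = g ` Inr ` Uncoded_all"

lemma P_eq_None: "P k1 j k2 = None \<longleftrightarrow> cell k1 (r j) k2 = None"
  by (simp add: P_def)

lemma same_symbol_same_label:
  assumes "k1 \<in> {1..K1}" "k2 \<in> {1..K2}" "j \<in> {1..F}" "k1' \<in> {1..K1}" "k2' \<in> {1..K2}" "j' \<in> {1..F}"
    and "P k1 j k2 = Some s" "P k1' j' k2' = Some s"
  obtains l where "cell k1 (r j) k2 = Some l" "cell k1' (r j') k2' = Some l"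
proof -
  obtain l l' where l: "cell k1 (r j) k2 = Some l" "cell k1' (r j') k2' = Some l'" "g l = g l'"
    using assms(7,8) by (auto simp: P_def)
  have "l \<in> Labels_at k1" "l' \<in> Labels_at k1'"
    using cell_in_Labels_at[OF _ _ r_mem_Rows] assms(1-6) l(1,2) by blast+
  then have "l \<in> Labels" "l' \<in> Labels" using Labels_at_subset_Labels assms(1,4) by blast+
  then have "l = l'" using inj_onD[OF inj_g l(3)] by blast
  then show thesis using that l by simp
qed

lemma card_S: "k1 \<in> {1..K1} \<Longrightarrow> card (S k1) = card (Labels_at k1)"
  unfolding S_def by (rule card_image[OF inj_on_subset[OF inj_g Labels_at_subset_Labels]])

lemma card_Union_S: "card (\<Union>k1\<in>{1..K1}. S k1) = card Coded + card Uncoded_all"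
proof -
  have "(\<Union>k1\<in>{1..K1}. S k1) = g ` (Coded <+> Uncoded_all)"
    using Union_Labels_at unfolding S_def by blast
  moreover have "Coded <+> Uncoded_all \<subseteq> Labels" using Uncoded_all_subset by (auto simp: Labels_def)
  ultimately show ?thesis
    using inj_on_subset[OF inj_g] finite_subset[OF Uncoded_all_subset] by (simp add: card_image card_Plus)
qed

lemma card_Sm: "card Sm = card Uncoded_all"
proof -
  have "Inr ` Uncoded_all \<subseteq> Labels" using Uncoded_all_subset by (auto simp: Labels_def)
  then have "inj_on g (Inr ` Uncoded_all)" by (rule inj_on_subset[OF inj_g])
  then show ?thesis unfolding Sm_def by (simp add: card_image)
qed

lemma P_entry_in_S:
  assumes "k1 \<in> {1..K1}" "j \<in> {1..F}" "k2 \<in> {1..K2}"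
  shows "P k1 j k2 = None \<or> (\<exists>s\<in>S k1. P k1 j k2 = Some s)"
proof (cases "cell k1 (r j) k2")
  case (Some l)
  then have "l \<in> Labels_at k1" using cell_in_Labels_at[OF assms(1,3) r_mem_Rows[OF assms(2)]] by blast
  then show ?thesis using Some by (simp add: P_def S_def)
qed (simp add: P_def)

lemma S_occurs_in_P:
  assumes "s \<in> S k1"
  shows "\<exists>j\<in>{1..F}. \<exists>k2\<in>{1..K2}. P k1 j k2 = Some s"
proof -
  obtain l where l: "l \<in> Labels_at k1" "s = g l" using assms by (auto simp: S_def)
  obtain T k2 where T: "T \<in> Rows" "k2 \<in> {1..K2}" "cell k1 T k2 = Some l"
    by (rule Labels_at_obtain_cell[OF l(1)])
  obtain j where j: "j \<in> {1..F}" "r j = T" using Rows_obtain_r[OF T(1)] .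
  then have "P k1 j k2 = Some s" using T l by (simp add: P_def)
  then show ?thesis using j T by blast
qed

lemma P_same_symbol_same_group:
  assumes k1: "k1 \<in> {1..K1}"
    and bounds: "j1 \<in> {1..F}" "ka \<in> {1..K2}" "j2 \<in> {1..F}" "kb \<in> {1..K2}"
    and ne: "(j1, ka) \<noteq> (j2, kb)" and same: "P k1 j1 ka = Some s" "P k1 j2 kb = Some s"
  shows "j1 \<noteq> j2 \<and> ka \<noteq> kb \<and> P k1 j1 kb = None \<and> P k1 j2 ka = None"
proof -
  obtain l where l: "cell k1 (r j1) ka = Some l" "cell k1 (r j2) kb = Some l"
    by (rule same_symbol_same_label[OF k1 bounds(2,1) k1 bounds(4,3) same])
  have "(r j1, ka) \<noteq> (r j2, kb)" using bounds ne r_eq_iff by auto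
  then have "r j1 \<noteq> r j2 \<and> ka \<noteq> kb \<and> cell k1 (r j1) kb = None \<and> cell k1 (r j2) ka = None"
    using l by (rule cell_same_label_same_group[OF bounds(2,4)])
  then show ?thesis by (auto simp: P_eq_None)
qed

lemma pda_P:
  assumes k1: "k1 \<in> {1..K1}"
  shows "pda K2 F Z2 (S k1) (P k1)"
proof -
  have card_pos: "0 < card (S k1)"
    using card_S[OF k1] card_Labels_at card_Uncoded[OF k1] K2_pos Z1_pos by simp
  have columns: "\<forall>k\<in>{1..K2}. card {j \<in> {1..F}. P k1 j k = None} = Z2"
    using card_rows_with[of "\<lambda>T. cell k1 T _ = None"] card_Rows_star[OF k1 mem_G]
    by (simp add: P_eq_None cell_eq_None)
  have "finite (S k1)" using card_pos card_ge_0_finite by blast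
  with card_pos columns show ?thesis
    unfolding pda_def using K2_pos F_pos P_entry_in_S[OF k1] S_occurs_in_P
      P_same_symbol_same_group[OF k1]
    by blast
qed

lemma P_eq_Some_Uncoded:
  assumes "k1 \<in> {1..K1}" "k2 \<in> {1..K2}" "j \<in> {1..F}" "(u, T) \<in> Uncoded_all"
    and "P k1 j k2 = Some (g (Inr (u, T)))"
  shows "u = (k1, k2) \<and> G k1 \<subseteq> r j"
proof -
  obtain l where l: "cell k1 (r j) k2 = Some l" "g l = g (Inr (u, T))"
    using assms(5) by (auto simp: P_def)
  have "l \<in> Labels"
    using cell_in_Labels_at[OF assms(1,2) r_mem_Rows[OF assms(3)] l(1)] Labels_at_subset_Labels[OF assms(1)] by blast
  moreover have "Inr (u, T) \<in> Labels" using assms(4) Uncoded_all_subset by (auto simp: Labels_def)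
  ultimately have "l = Inr (u, T)" using inj_onD[OF inj_g l(2)] by blast
  then show ?thesis using cell_eq_Inr l(1) by blast
qed

lemma Sm_occurs_in_P:
  assumes "(u, T) \<in> Uncoded_all"
  obtains j where "j \<in> {1..F}" "fst u \<in> {1..K1}" "snd u \<in> {1..K2}"
    "P (fst u) j (snd u) = Some (g (Inr (u, T)))"
proof -
  obtain a b where ab: "u = (a, b)" "a \<in> {1..K1}" "b \<in> {1..K2}" "T \<in> Rows" "G a \<subseteq> T"
    using assms by (auto simp: Uncoded_all_def U_def)
  obtain j where j: "j \<in> {1..F}" "r j = T" using Rows_obtain_r[OF ab(4)] .
  have "(a, b) \<in> T" using ab mem_G by blast
  then have "cell a T b = Some (Inr ((a, b), T))" using ab by (simp add: cell_def label_def)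
  then show thesis using that j ab by (simp add: P_def)
qed

lemma Sm_in_one_group:
  assumes "s \<in> Sm"
  shows "(\<exists>!k1. k1 \<in> {1..K1} \<and> (\<exists>j\<in>{1..F}. \<exists>k2\<in>{1..K2}. P k1 j k2 = Some s)) \<and>
    (\<forall>k1\<in>{1..K1}. \<forall>j\<in>{1..F}. \<forall>k2\<in>{1..K2}. P k1 j k2 = Some s \<longrightarrow> P0 j k1)"
proof -
  obtain u T where uT: "(u, T) \<in> Uncoded_all" "s = g (Inr (u, T))"
    using assms unfolding Sm_def by auto
  obtain j where j: "j \<in> {1..F}" "fst u \<in> {1..K1}" "snd u \<in> {1..K2}" "P (fst u) j (snd u) = Some s"
    using Sm_occurs_in_P[OF uT(1)] uT(2) by metis
  have only_u: "k1 = fst u \<and> P0 j' k1"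
    if "k1 \<in> {1..K1}" "j' \<in> {1..F}" "k2 \<in> {1..K2}" "P k1 j' k2 = Some s" for k1 j' k2
    using P_eq_Some_Uncoded[OF that(1,3,2) uT(1)] that(4) uT(2) by (auto simp: P0_def)
  have "\<exists>!k1. k1 \<in> {1..K1} \<and> (\<exists>j\<in>{1..F}. \<exists>k2\<in>{1..K2}. P k1 j k2 = Some s)"
    by (rule ex1I[where a = "fst u"]) (use j only_u in blast)+
  then show ?thesis using only_u by blast
qed

lemma P_same_symbol_other_group:
  assumes bounds: "k1 \<in> {1..K1}" "k1' \<in> {1..K1}" "j \<in> {1..F}" "j' \<in> {1..F}" "k2 \<in> {1..K2}" "k2' \<in> {1..K2}"
    and ne: "k1 \<noteq> k1'" and same: "P k1 j k2 = Some s" "P k1' j' k2' = Some s"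
  shows "(P k1 j' k2 \<noteq> None \<longrightarrow> P0 j' k1) \<and> (P k1' j k2' \<noteq> None \<longrightarrow> P0 j k1')"
proof -
  obtain l where "cell k1 (r j) k2 = Some l" "cell k1' (r j') k2' = Some l"
    by (rule same_symbol_same_label[OF bounds(1,5,3,2,6,4) same])
  then show ?thesis using cell_same_label_other_group[OF ne] by (simp add: P_eq_None P0_def)
qed

lemma hpda_P: "hpda K1 K2 F Z1 Z2 Sm S P0 P"
proof -
  have B1: "\<forall>k1\<in>{1..K1}. card {j \<in> {1..F}. P0 j k1} = Z1"
    using card_rows_with[of "\<lambda>T. G _ \<subseteq> T"] card_Rows_supset_G by (simp add: P0_def)
  have B4: "\<forall>k1\<in>{1..K1}. \<forall>k1'\<in>{1..K1}. \<forall>j\<in>{1..F}. \<forall>j'\<in>{1..F}. \<forall>k2\<in>{1..K2}. \<forall>k2'\<in>{1..K2}. \<forall>s.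
      k1 \<noteq> k1' \<and> P k1 j k2 = Some s \<and> P k1' j' k2' = Some s \<longrightarrow>
      (P k1 j' k2 \<noteq> None \<longrightarrow> P0 j' k1) \<and> (P k1' j k2' \<noteq> None \<longrightarrow> P0 j k1')"
    using P_same_symbol_other_group by blast
  have B2: "\<forall>k1\<in>{1..K1}. pda K2 F Z2 (S k1) (P k1)" using pda_P by blast
  have B3: "\<forall>s\<in>Sm. (\<exists>!k1. k1 \<in> {1..K1} \<and> (\<exists>j\<in>{1..F}. \<exists>k2\<in>{1..K2}. P k1 j k2 = Some s)) \<and>
      (\<forall>k1\<in>{1..K1}. \<forall>j\<in>{1..F}. \<forall>k2\<in>{1..K2}. P k1 j k2 = Some s \<longrightarrow> P0 j k1)"
    using Sm_in_one_group by blast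
  show ?thesis
    unfolding hpda_def by (intro conjI K1_pos K2_pos F_pos Z1_pos Z1_less_F Z2_less_F B1 B2 B3 B4)
qed

lemma card_Union_S_minus_card_Sm:
  "int (card (\<Union>k1\<in>{1..K1}. S k1)) - int (card Sm) = int ((K1 * K2) choose (t + 1))"
  using card_Union_S card_Sm card_Coded by simp

lemma card_S_eq:
  "k1 \<in> {1..K1} \<Longrightarrow> int (card (S k1)) =
     int ((K1 * K2) choose (t + 1)) - int ((K1 * K2 - K2) choose (t + 1)) + int K2 * int Z1"
  using card_S card_Labels_at_eq choose_Suc_le by (simp add: of_nat_diff)

end

type_synonym demand = "nat \<times> nat \<Rightarrow> nat"
type_synonym files = "nat \<Rightarrow> bool list"
type_synonym cache = "nat \<times> nat \<Rightarrow> bool list"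

locale hier_delivery = indexed_rows +
  fixes coded :: "(nat \<times> nat) set list"
    and labs :: "nat \<Rightarrow> hlabel list"
  assumes set_coded: "set coded = Coded" and distinct_coded: "distinct coded"
    and set_labs: "k1 \<in> {1..K1} \<Longrightarrow> set (labs k1) = Labels_at k1"
    and distinct_labs: "distinct (labs k1)"
begin

definition mirror_cache :: "nat \<Rightarrow> nat \<Rightarrow> (nat \<times> nat) set" where
  "mirror_cache N k1 = {1..N} \<times> {j \<in> {1..F}. G k1 \<subseteq> r j}"

definition user_cache :: "nat \<Rightarrow> nat \<times> nat \<Rightarrow> (nat \<times> nat) set" where
  "user_cache N u = {1..N} \<times> {j \<in> {1..F}. cell (fst u) (r j) (snd u) = None}"

definition piece :: "nat \<Rightarrow> demand \<Rightarrow> files \<Rightarrow> (nat \<times> nat) set \<Rightarrow> nat \<times> nat \<Rightarrow> nat \<Rightarrow> bit"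
  where
  "piece L d W A v = bits (packet L W (d v) (row_index (A - {v})))"

definition server_msg :: "nat \<Rightarrow> demand \<Rightarrow> files \<Rightarrow> bool list list" where
  "server_msg L d W = map (\<lambda>A. from_bits L (\<Sum>v\<in>A. piece L d W A v)) coded"

definition mirror_symbol :: "nat \<Rightarrow> nat \<Rightarrow> demand \<Rightarrow> bool list list \<Rightarrow> cache \<Rightarrow> hlabel \<Rightarrow> bool list"
  where
  "mirror_symbol L k1 d X C l = (case l of
      Inl A \<Rightarrow> from_bits L (bits (the (map_of (zip coded X) A))
                 - (\<Sum>v\<in>{v \<in> A. G k1 \<subseteq> A - {v}}. bits (C (d v, row_index (A - {v})))))
    | Inr (u, T) \<Rightarrow> from_bits L (bits (C (d u, row_index T))))"

definition mirror_msg :: "nat \<Rightarrow> nat \<Rightarrow> demand \<Rightarrow> bool list list \<Rightarrow> cache \<Rightarrow> bool list list"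
  where
  "mirror_msg L k1 d X C = map (mirror_symbol L k1 d X C) (labs k1)"

definition decode_packet :: "nat \<Rightarrow> nat \<times> nat \<Rightarrow> demand \<Rightarrow> bool list list \<Rightarrow> cache \<Rightarrow> nat \<Rightarrow> bool list"
  where
  "decode_packet L u d Y C f = (case cell (fst u) (r f) (snd u) of
      None \<Rightarrow> C (d u, f)
    | Some (Inl A) \<Rightarrow> from_bits L (bits (the (map_of (zip (labs (fst u)) Y) (Inl A)))
                 - (\<Sum>v\<in>{v \<in> A - {u}. \<not> G (fst u) \<subseteq> A - {v}}. bits (C (d v, row_index (A - {v})))))
    | Some (Inr p) \<Rightarrow> the (map_of (zip (labs (fst u)) Y) (Inr p)))"

definition user_decode :: "nat \<Rightarrow> nat \<times> nat \<Rightarrow> demand \<Rightarrow> bool list list \<Rightarrow> cache \<Rightarrow> bool list"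
  where
  "user_decode L u d Y C = concat (map (decode_packet L u d Y C) [1..<F+1])"

lemma length_mirror_symbol [simp]: "length (mirror_symbol L k1 d X C l) = L"
  by (simp add: mirror_symbol_def split: sum.split prod.split)

lemma mem_mirror_cache: "n \<in> {1..N} \<Longrightarrow> T \<in> Rows \<Longrightarrow> G k1 \<subseteq> T \<Longrightarrow> (n, row_index T) \<in> mirror_cache N k1"
  using row_index_mem[of T] by (simp add: mirror_cache_def r_row_index)

lemma mem_user_cache:
  "n \<in> {1..N} \<Longrightarrow> T \<in> Rows \<Longrightarrow> cell (fst u) T (snd u) = None \<Longrightarrow> (n, row_index T) \<in> user_cache N u"
  using row_index_mem[of T] by (simp add: user_cache_def r_row_index)

lemma server_msg_lookup:
  "A \<in> Coded \<Longrightarrow> the (map_of (zip coded (server_msg L d W)) A) = from_bits L (\<Sum>v\<in>A. piece L d W A v)"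
  unfolding server_msg_def using set_coded by (simp add: the_map_of_zip_map)

lemma mirror_msg_lookup:
  "k1 \<in> {1..K1} \<Longrightarrow> l \<in> Labels_at k1 \<Longrightarrow>
    the (map_of (zip (labs k1) (mirror_msg L k1 d X C)) l) = mirror_symbol L k1 d X C l"
  unfolding mirror_msg_def using set_labs by (simp add: the_map_of_zip_map)

context
  fixes N L :: nat and d :: demand and W :: files
  assumes length_W: "\<And>n. n \<in> {1..N} \<Longrightarrow> length (W n) = F * L"
    and d_range: "\<And>v. v \<in> U \<Longrightarrow> d v \<in> {1..N}"
begin

lemma length_packet_row: "v \<in> U \<Longrightarrow> T \<in> Rows \<Longrightarrow> length (packet L W (d v) (row_index T)) = L"
  using length_packet length_W d_range row_index_mem by blast

lemma d_mem: "A \<in> Coded \<Longrightarrow> v \<in> A \<Longrightarrow> d v \<in> {1..N}"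
  by (rule d_range) (auto simp: Coded_def)

lemma mirror_symbol_Inl:
  assumes "A \<in> Coded"
  shows "mirror_symbol L k1 d (server_msg L d W) (cache_of L (mirror_cache N k1) W) (Inl A)
    = from_bits L ((\<Sum>v\<in>A. piece L d W A v) - (\<Sum>v\<in>{v \<in> A. G k1 \<subseteq> A - {v}}. piece L d W A v))"
proof -
  have "bits (cache_of L (mirror_cache N k1) W (d v, row_index (A - {v}))) = piece L d W A v"
    if "v \<in> A" "G k1 \<subseteq> A - {v}" for v
  proof -
    have "(d v, row_index (A - {v})) \<in> mirror_cache N k1"
      using that assms by (intro mem_mirror_cache d_mem Diff_mem_Rows)
    then show ?thesis by (simp add: cache_of_mem piece_def)
  qed
  then have "(\<Sum>v\<in>{v \<in> A. G k1 \<subseteq> A - {v}}. bits (cache_of L (mirror_cache N k1) W (d v, row_index (A - {v}))))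
      = (\<Sum>v\<in>{v \<in> A. G k1 \<subseteq> A - {v}}. piece L d W A v)"
    by (intro sum.cong) auto
  then show ?thesis
    using assms by (simp add: mirror_symbol_def server_msg_lookup from_bits_bits_diff)
qed

lemma mirror_symbol_Inr:
  assumes "u \<in> U" "T \<in> Rows" "G k1 \<subseteq> T"
  shows "mirror_symbol L k1 d X (cache_of L (mirror_cache N k1) W) (Inr (u, T)) = packet L W (d u) (row_index T)"
  using assms mem_mirror_cache[OF d_range] length_packet_row
  by (simp add: mirror_symbol_def cache_of_mem from_bits_bits)

text \<open>Besides the piece of u, the multicast of A consists of pieces cached at the mirror,
  which the mirror has removed, and pieces cached at u.\<close>

lemma decode_coded_packet:
  assumes k1: "k1 \<in> {1..K1}" and A: "A \<in> Coded" "(k1, k2) \<in> A"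
  shows "from_bits L (bits (from_bits L ((\<Sum>v\<in>A. piece L d W A v) - (\<Sum>v\<in>{v \<in> A. G k1 \<subseteq> A - {v}}. piece L d W A v)))
      - (\<Sum>v\<in>{v \<in> A - {(k1, k2)}. \<not> G k1 \<subseteq> A - {v}}. bits (cache_of L (user_cache N (k1, k2)) W (d v, row_index (A - {v})))))
    = packet L W (d (k1, k2)) (row_index (A - {(k1, k2)}))"
proof -
  let ?u = "(k1, k2)"
  have u_G: "?u \<in> G k1" using A mem_G by (auto simp: Coded_def U_def)
  have "bits (cache_of L (user_cache N ?u) W (d v, row_index (A - {v}))) = piece L d W A v"
    if "v \<in> A - {?u}" "\<not> G k1 \<subseteq> A - {v}" for v
  proof -
    have "cell k1 (A - {v}) k2 = None" using that A by (auto simp: cell_eq_None)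
    then have "(d v, row_index (A - {v})) \<in> user_cache N ?u"
      using that A by (intro mem_user_cache d_mem Diff_mem_Rows) auto
    then show ?thesis by (simp add: cache_of_mem piece_def)
  qed
  then have "(\<Sum>v\<in>{v \<in> A - {?u}. \<not> G k1 \<subseteq> A - {v}}. bits (cache_of L (user_cache N ?u) W (d v, row_index (A - {v}))))
      = (\<Sum>v\<in>{v \<in> A - {?u}. \<not> G k1 \<subseteq> A - {v}}. piece L d W A v)"
    by (intro sum.cong) auto
  moreover have "(\<Sum>v\<in>A. piece L d W A v) = piece L d W A ?u
      + (\<Sum>v\<in>{v \<in> A. G k1 \<subseteq> A - {v}}. piece L d W A v) + (\<Sum>v\<in>{v \<in> A - {?u}. \<not> G k1 \<subseteq> A - {v}}. piece L d W A v)"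
    using A u_G finite_subset[OF _ finite_U] by (intro sum_split_off) (auto simp: Coded_def)
  moreover have "length (packet L W (d ?u) (row_index (A - {?u}))) = L"
    using A by (intro length_packet_row Diff_mem_Rows) (auto simp: Coded_def)
  ultimately show ?thesis by (simp add: from_bits_bits_diff piece_def from_bits_bits)
qed

lemma decode_packet_correct:
  assumes k: "k1 \<in> {1..K1}" "k2 \<in> {1..K2}" and f: "f \<in> {1..F}"
  shows "decode_packet L (k1, k2) d (mirror_msg L k1 d (server_msg L d W) (cache_of L (mirror_cache N k1) W))
      (cache_of L (user_cache N (k1, k2)) W) f = packet L W (d (k1, k2)) f"
proof -
  let ?u = "(k1, k2)"
  have u: "?u \<in> U" using k by (simp add: U_def)
  have T: "r f \<in> Rows" using r_mem_Rows[OF f] .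
  show ?thesis
  proof (cases "cell k1 (r f) k2")
    case None
    then have "(d ?u, f) \<in> user_cache N ?u"
      using mem_user_cache[OF d_range[OF u] T] by (simp add: row_index_r[OF f])
    then show ?thesis using None by (simp add: decode_packet_def cache_of_mem)
  next
    case (Some l)
    note lookup = mirror_msg_lookup[OF k(1) cell_in_Labels_at[OF k T Some]]
    show ?thesis
    proof (cases l)
      case (Inl A)
      then have "?u \<notin> r f" "A = insert ?u (r f)" using Some cell_eq_Inl by auto
      then have A: "A \<in> Coded" "?u \<in> A" "A - {?u} = r f" using insert_mem_Coded[OF u T] by auto
      then show ?thesis
        using Some Inl lookup mirror_symbol_Inl decode_coded_packet[OF k(1) A(1,2)] row_index_r[OF f]
        by (simp add: decode_packet_def)
    next
      case (Inr p)
      then have "p = (?u, r f)" "G k1 \<subseteq> r f" using Some cell_eq_Inr by (metis surj_pair)+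
      then show ?thesis
        using Some Inr lookup mirror_symbol_Inr[OF u T] row_index_r[OF f] by (simp add: decode_packet_def)
    qed
  qed
qed

lemma user_decode_correct:
  assumes "k1 \<in> {1..K1}" "k2 \<in> {1..K2}"
  shows "user_decode L (k1, k2) d (mirror_msg L k1 d (server_msg L d W) (cache_of L (mirror_cache N k1) W))
      (cache_of L (user_cache N (k1, k2)) W) = W (d (k1, k2))"
proof -
  have "d (k1, k2) \<in> {1..N}" using assms d_range by (simp add: U_def)
  then have len: "length (W (d (k1, k2))) = F * L" by (rule length_W)
  have eq: "map (decode_packet L (k1, k2) d (mirror_msg L k1 d (server_msg L d W) (cache_of L (mirror_cache N k1) W))
      (cache_of L (user_cache N (k1, k2)) W)) [1..<F+1] = map (packet L W (d (k1, k2))) [1..<F+1]"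
    using decode_packet_correct[OF assms] by (intro map_cong) auto
  show ?thesis unfolding user_decode_def eq using len by (rule concat_packets)
qed

end

lemma card_mirror_cache: "k1 \<in> {1..K1} \<Longrightarrow> card (mirror_cache N k1) = N * Z1"
  using card_rows_with[of "\<lambda>T. G k1 \<subseteq> T"] card_Rows_supset_G
  by (simp add: mirror_cache_def card_cartesian_product)

lemma card_user_cache: "k1 \<in> {1..K1} \<Longrightarrow> k2 \<in> {1..K2} \<Longrightarrow> card (user_cache N (k1, k2)) = N * Z2"
  using card_rows_with[of "\<lambda>T. cell k1 T k2 = None"] card_Rows_star[OF _ mem_G]
  by (simp add: user_cache_def card_cartesian_product cell_eq_None)

lemma length_coded: "length coded = card Coded"
  using distinct_card[OF distinct_coded] set_coded by simp

lemma length_labs: "k1 \<in> {1..K1} \<Longrightarrow> length (labs k1) = card (Labels_at k1)"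
  using distinct_card[OF distinct_labs, of k1] set_labs[of k1] by simp

lemma hier_scheme_delivery:
  assumes N: "0 < N" and B: "F dvd B"
  shows "hier_scheme K1 K2 (real N * (real Z1 / real F)) (real N * (real t / real (K1 * K2) - real Z1 / real F))
      N F B (mirror_cache N) (user_cache N) (server_msg (B div F)) (\<lambda>_. length coded)
      (mirror_msg (B div F)) (\<lambda>k1 _. length (labs k1)) (user_decode (B div F))
      ((real (K1 * K2) - real t) / (real t + 1))
      ((real (K1 * K2) - real t) / (real t + 1)
        - real ((K1 * K2 - K2) choose (t + 1)) / real F + real K2 * real Z1 / real F)"
proof -
  define L where "L = B div F"
  define D where "D = demands K1 K2 N"
  have BL: "B = F * L" using B by (simp add: L_def)
  have D_ne: "D \<noteq> {}" using demands_nonempty[OF N] by (simp add: D_def)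
  have caches: "mirror_cache N k1 \<subseteq> {1..N} \<times> {1..F}" "user_cache N u \<subseteq> {1..N} \<times> {1..F}" for k1 u
    by (auto simp: mirror_cache_def user_cache_def)
  have decodes: "\<forall>d\<in>D. \<forall>W. \<forall>k1\<in>{1..K1}. \<forall>k2\<in>{1..K2}. valid_files N B W \<longrightarrow>
      user_decode L (k1, k2) d (mirror_msg L k1 d (server_msg L d W) (cache_of L (mirror_cache N k1) W))
        (cache_of L (user_cache N (k1, k2)) W) = W (d (k1, k2))"
    using user_decode_correct demands_range BL by (simp add: D_def valid_files_def)
  have R1: "(real (K1 * K2) - real t) / (real t + 1) = Max ((\<lambda>d. real (length coded) / real F) ` D)"
    using D_ne choose_Suc_div_choose by (simp add: length_coded card_Coded Max_image_const)
  have R2: "(real (K1 * K2) - real t) / (real t + 1)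
        - real ((K1 * K2 - K2) choose (t + 1)) / real F + real K2 * real Z1 / real F
      = Max ((\<lambda>(k1, d). real (length (labs k1)) / real F) ` ({1..K1} \<times> D))"
    using D_ne K1_pos by (intro Max_image_const[symmetric]) (auto simp: length_labs card_Labels_at_div_F)
  show ?thesis
    unfolding hier_scheme_def Let_def L_def[symmetric] D_def[symmetric] user_memory_fraction
    using F_pos B caches decodes R1 R2
    by (simp add: server_msg_def mirror_msg_def card_mirror_cache card_user_cache)
qed

end

theorem theorem2:
  fixes K1 K2 t :: nat
  assumes "0 < K1" and "0 < K2" and "0 < t" and "K2 < t" and "t < K1 * K2"
  defines "F \<equiv> (K1 * K2) choose t"
      and "Z1 \<equiv> (K1 * K2 - K2) choose (t - K2)"
      and "Z2 \<equiv> ((K1 * K2 - 1) choose (t - 1)) - ((K1 * K2 - K2) choose (t - K2))"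
  shows "(\<exists>Sm S P0 P. hpda K1 K2 F Z1 Z2 Sm S P0 P \<and>
            int (card (\<Union>k1\<in>{1..K1}. S k1)) - int (card Sm) = int ((K1 * K2) choose (t + 1)) \<and>
            (\<forall>k1\<in>{1..K1}. int (card (S k1)) =
               int ((K1 * K2) choose (t + 1)) - int ((K1 * K2 - K2) choose (t + 1))
               + int K2 * int ((K1 * K2 - K2) choose (t - K2))))
       \<and> (\<forall>N B. K1 * K2 \<le> N \<longrightarrow> F dvd B \<longrightarrow>
            (\<exists>Zm Zu enc Sd mir Sk dec.
               hier_scheme K1 K2
                 (real N * (real Z1 / real F))
                 (real N * (real t / real (K1 * K2) - real Z1 / real F))
                 N F B Zm Zu enc Sd mir Sk dec
                 ((real (K1 * K2) - real t) / (real t + 1))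
                 ((real (K1 * K2) - real t) / (real t + 1)
                   - real ((K1 * K2 - K2) choose (t + 1)) / real F
                   + real K2 * real Z1 / real F)))"
proof -
  interpret hier_setup K1 K2 t using assms by unfold_locales auto
  obtain r where r: "bij_betw r {1..(K1 * K2) choose t} Rows"
    using ex_bij_betw_nat_finite_1[OF finite_Rows] card_Rows by auto
  obtain g :: "_ \<Rightarrow> int" where g: "inj_on g Labels" using finite_inj_on_int[OF finite_Labels] by blast
  obtain coded where coded: "set coded = Coded" "distinct coded"
    using finite_distinct_list[OF finite_Coded] by blast
  obtain labs where labs: "\<And>k1. set (labs k1) = Labels_at k1" "\<And>k1. distinct (labs k1)"
    using finite_distinct_list[OF finite_Labels_at] by metis
  interpret hpda_construction K1 K2 t r g by unfold_locales (fact r g)+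
  interpret hier_delivery K1 K2 t r coded labs by unfold_locales (simp_all add: r coded labs)
  have "0 < N" if "K1 * K2 \<le> N" for N
    using that K1_pos K2_pos by (metis nat_0_less_mult_iff order_less_le_trans)
  then show ?thesis
    unfolding F_def Z1_def Z2_def
    using hpda_P card_Union_S_minus_card_Sm card_S_eq hier_scheme_delivery by blast
qed

end
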